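(* For every well-typed CorePolyC program $p$ there is a polynomial $q$ such that $\mathrm{sz}([\![p]\!](\tilde v))\le q(\mathrm{sz}(\tilde v))$ for every input tuple $\tilde v$.
   Context: CorePolyC. Types are $\mathtt{iint},\mathtt{int},\mathtt{bool}$; $\mathsf{Int}=\{\mathtt{iint},\mathtt{int}\}$, ordered by $\mathtt{iint}\preccurlyeq\mathtt{int}$. Values are unbounded integers ($\mathbb Z$) and booleans $\#t,\#f$. Expressions: variables $x$; constants (nonempty decimal digit strings denoting natural numbers; $\mathtt{true}$, $\mathtt{false}$); operator applications $\mathtt{op}(e_1,\dots,e_m)$; parenthesized $(e)$. Operators and semantics: unary $-$ (negation); binary $+,-,/,\%$ (integer addition, subtraction, division, remainder, with division and remainder by $0$ returning $0$); $\mathtt{size}$, with $\mathtt{size}(v)=\lceil\log_2(\mathrm{abs}(v)+1)\rceil$; comparisons $\texttt{>=},\texttt{<=},\texttt{>},\texttt{<},\texttt{==},\texttt{!=}$ on integers returning booleans; boolean $\texttt{!},\texttt{\&\&},\texttt{||}$. Statements: declaration $t\ x;$; assignment $x=e;$; block $\{s_1\dots s_m\}$; conditional $\mathbf{if}(e)\ s_1\ \mathbf{else}\ s_2$; loop $\mathbf{for}(x<\mathtt{size}(e))\ s$ (loop bounds are always syntactically of the form $\mathtt{size}(e)$). A program is $\mathbf{int\ main}(\mathbf{int}\ x_1,\dots,\mathbf{int}\ x_m)\{s_1\dots s_k\ \mathbf{return}\ e;\}$. Semantics (big-step). A store $\Sigma$ is a finite partial map from variables to values; $\Sigma[x\mapsto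 v]$ is the update. $\Sigma\vdash e\Downarrow v$: a variable $x\in\mathrm{dom}\,\Sigma$ evaluates to $\Sigma(x)$, constants to their value, $\mathtt{op}(e_1,\dots,e_m)$ to $\mathtt{op}$ applied to the values of the $e_i$. $\Sigma\vdash s\Downarrow\Sigma'$: $t\ x;$ gives $\Sigma[x\mapsto 0]$ if $t\in\mathsf{Int}$ and $\Sigma[x\mapsto\#f]$ if $t=\mathtt{bool}$; $x=e;$ (with $x\in\mathrm{dom}\,\Sigma$) gives $\Sigma[x\mapsto v]$ where $\Sigma\vdash e\Downarrow v$; a sequence or block executes its statements in order threading the store (a block returns the final store); a conditional evaluates its guard to a boolean and executes the corresponding branch; $\mathbf{for}(x<e)\ s$ evaluates $e$ once to an integer $i$, sets $\Sigma_0=\Sigma$, executes $s$ from $\Sigma_j[x\mapsto j]$ obtaining $\Sigma_{j+1}$ for $j=0,\dots,i-1$, and ends in $\Sigma_i$ (i.e. in $\Sigma$ if $i\le 0$). A program on inputs $v_1,\dots,v_m$ runs its statements from the store $[x_1\mapsto v_1,\dots,x_m\mapsto v_m]$ and outputs the value of its return expression in the resulting store. Type system. A typing environment $\Gamma$ is a finite partial map from variables to types; $\ell\in\{\#t,\#f\}$ is the loop indicator. Expression typing $\Gamma,\ell\vdash e:t$: a variable $x\in\mathrm{dom}\,\Gamma$ has type $\Gamma(x)$; digit literals have type $\mathtt{iint}$, $\mathtt{true},\mathtt{false}$ have type $\mathtt{bool}$; $\texttt{!},\texttt{\&\&},\texttt{||}$ take $\mathtt{bool}$ arguments to $\mathtt{bool}$;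 comparisons take arguments with types in $\mathsf{Int}$ to $\mathtt{bool}$; $+,-,/,\%$ take arguments with types in $\mathsf{Int}$ to their supremum under $\preccurlyeq$ ($\mathtt{iint}$ iff all arguments are $\mathtt{iint}$); $\mathtt{size}$ takes only an $\mathtt{iint}$ argument, giving $\mathtt{iint}$; parentheses preserve types. Statement typing $\Gamma,\ell\vdash s:\Gamma'$: $t\ x;$ is typable iff $x\notin\mathrm{dom}\,\Gamma$ and not($\ell=\#t$ and $t=\mathtt{iint}$), giving $\Gamma[x\mapsto t]$; $x=e;$ is typable iff $x\in\mathrm{dom}\,\Gamma$, not($\ell=\#t$ and $\Gamma(x)=\mathtt{iint}$), and $\Gamma,\ell\vdash e:t$ with $t,\Gamma(x)$ both in $\mathsf{Int}$ or both $\mathtt{bool}$, giving $\Gamma$; a sequence $s_1\dots s_m$ threads $\Gamma_0=\Gamma$, $\Gamma_{i-1},\ell\vdash s_i:\Gamma_i$, giving $\Gamma_m$; a block $\{\tilde s\}$ is typable if its sequence is, giving $\Gamma$; a conditional needs a guard of type $\mathtt{bool}$ and both branches typable under $\Gamma,\ell$, giving $\Gamma$; $\mathbf{for}(x<e)\ s$ needs $\Gamma,\ell\vdash e:\mathtt{iint}$, $x\notin\mathrm{dom}\,\Gamma$, and $\Gamma[x\mapsto\mathtt{iint}],\#t\vdash s:\Gamma'$ for some $\Gamma'$, giving $\Gamma$. A program is well-typed if its statements are typable starting from $[x_1\mapsto\mathtt{int},\dots,x_m\mapsto\mathtt{int}]$ with $\ell=\#f$, ending in some $\Gamma'$, and its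 return expression has a type in $\mathsf{Int}$ under $\Gamma',\#f$. A well-typed program $p$ with $m$ inputs computes a total function $[\![p]\!]:\mathbb Z^m\to\mathbb Z$. Sizes: $\mathrm{sz}(v)=\lceil\log_2(\mathrm{abs}(v)+1)\rceil$ for $v\in\mathbb Z$, and $\mathrm{sz}(v_1,\dots,v_m)=\sum_i\mathrm{sz}(v_i)$. *)

theory Defs
  imports Complex_Main "HOL-Computational_Algebra.Polynomial"
begin

datatype ty = IInt | TInt | TBool

definition is_int_ty :: "ty \<Rightarrow> bool" where
  "is_int_ty t \<longleftrightarrow> t = IInt \<or> t = TInt"

datatype val = VInt int | VBool bool

(* Neg is unary minus, Minus is binary minus *)
datatype oper = Neg | Plus | Minus | Div | Mod | Size
  | Ge | Le | Gt | Lt | Eq | Neq | Not | And | Or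

datatype expr =
    EVar string
  | EConst nat            (* nonempty decimal digit string, denoting a natural number *)
  | ETrue
  | EFalse
  | EOp oper "expr list"
  | EParen expr

(* SFor x e s  stands for  for(x < size(e)) s  (loop bounds are always size(e)) *)
datatype stmt =
    SDecl ty string
  | SAssign string expr
  | SBlock "stmt list"
  | SIf expr stmt stmt
  | SFor string expr stmt

(* int main(int x1,...,int xm) { s1 ... sk return e; } *)
datatype prog = Prog "string list" "stmt list" expr

definition sz :: "int \<Rightarrow> nat" where
  "sz v = nat \<lceil>log 2 (real_of_int (\<bar>v\<bar> + 1))\<rceil>"

definition sz_list :: "int list \<Rightarrow> nat" where
  "sz_list vs = (\<Sum>v\<leftarrow>vs. sz v)"

(* integer division/remainder, truncating toward zero (C convention); by 0 gives 0 *)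
definition tdiv :: "int \<Rightarrow> int \<Rightarrow> int" where
  "tdiv a b = (if b = 0 then 0 else sgn a * sgn b * (\<bar>a\<bar> div \<bar>b\<bar>))"

definition tmod :: "int \<Rightarrow> int \<Rightarrow> int" where
  "tmod a b = (if b = 0 then 0 else a - b * tdiv a b)"

definition apply_op :: "oper \<Rightarrow> val list \<Rightarrow> val option" where
  "apply_op f vs =
    (case vs of
       [VInt a] \<Rightarrow>
         (case f of Neg \<Rightarrow> Some (VInt (- a))
                  | Size \<Rightarrow> Some (VInt (int (sz a)))
                  | _ \<Rightarrow> None)
     | [VBool a] \<Rightarrow> (if f = Not then Some (VBool (\<not> a)) else None)
     | [VInt a, VInt b] \<Rightarrow>
         (case f of Plus \<Rightarrow> Some (VInt (a + b))
                  | Minus \<Rightarrow> Some (VInt (a - b))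
                  | Div \<Rightarrow> Some (VInt (tdiv a b))
                  | Mod \<Rightarrow> Some (VInt (tmod a b))
                  | Ge \<Rightarrow> Some (VBool (a \<ge> b))
                  | Le \<Rightarrow> Some (VBool (a \<le> b))
                  | Gt \<Rightarrow> Some (VBool (a > b))
                  | Lt \<Rightarrow> Some (VBool (a < b))
                  | Eq \<Rightarrow> Some (VBool (a = b))
                  | Neq \<Rightarrow> Some (VBool (a \<noteq> b))
                  | _ \<Rightarrow> None)
     | [VBool a, VBool b] \<Rightarrow>
         (case f of And \<Rightarrow> Some (VBool (a \<and> b))
                  | Or \<Rightarrow> Some (VBool (a \<or> b))
                  | _ \<Rightarrow> None)
     | _ \<Rightarrow> None)"

type_synonym store = "string \<Rightarrow> val option"

inductive eval :: "store \<Rightarrow> expr \<Rightarrow> val \<Rightarrow> bool" where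
  EvVar: "\<Sigma> x = Some v \<Longrightarrow> eval \<Sigma> (EVar x) v"
| EvConst: "eval \<Sigma> (EConst n) (VInt (int n))"
| EvTrue: "eval \<Sigma> ETrue (VBool True)"
| EvFalse: "eval \<Sigma> EFalse (VBool False)"
| EvOp: "list_all2 (eval \<Sigma>) es vs \<Longrightarrow> apply_op f vs = Some v \<Longrightarrow> eval \<Sigma> (EOp f es) v"
| EvParen: "eval \<Sigma> e v \<Longrightarrow> eval \<Sigma> (EParen e) v"
monos list_all2_mono

definition default_val :: "ty \<Rightarrow> val" where
  "default_val t = (if t = TBool then VBool False else VInt 0)"

(* exec: statements; exec_seq: sequences; exec_loop x s i j \<Sigma>_j \<Sigma>_i: remaining loop
   iterations j, ..., i-1 *)
inductive exec :: "store \<Rightarrow> stmt \<Rightarrow> store \<Rightarrow> bool"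
  and exec_seq :: "store \<Rightarrow> stmt list \<Rightarrow> store \<Rightarrow> bool"
  and exec_loop :: "string \<Rightarrow> stmt \<Rightarrow> int \<Rightarrow> int \<Rightarrow> store \<Rightarrow> store \<Rightarrow> bool" where
  ExDecl: "exec \<Sigma> (SDecl t x) (\<Sigma>(x \<mapsto> default_val t))"
| ExAssign: "x \<in> dom \<Sigma> \<Longrightarrow> eval \<Sigma> e v \<Longrightarrow> exec \<Sigma> (SAssign x e) (\<Sigma>(x \<mapsto> v))"
| ExBlock: "exec_seq \<Sigma> ss \<Sigma>' \<Longrightarrow> exec \<Sigma> (SBlock ss) \<Sigma>'"
| ExIfT: "eval \<Sigma> e (VBool True) \<Longrightarrow> exec \<Sigma> s1 \<Sigma>' \<Longrightarrow> exec \<Sigma> (SIf e s1 s2) \<Sigma>'"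
| ExIfF: "eval \<Sigma> e (VBool False) \<Longrightarrow> exec \<Sigma> s2 \<Sigma>' \<Longrightarrow> exec \<Sigma> (SIf e s1 s2) \<Sigma>'"
| ExFor: "eval \<Sigma> (EOp Size [e]) (VInt i) \<Longrightarrow> exec_loop x s i 0 \<Sigma> \<Sigma>' \<Longrightarrow>
          exec \<Sigma> (SFor x e s) \<Sigma>'"
| SeqNil: "exec_seq \<Sigma> [] \<Sigma>"
| SeqCons: "exec \<Sigma> s \<Sigma>1 \<Longrightarrow> exec_seq \<Sigma>1 ss \<Sigma>' \<Longrightarrow> exec_seq \<Sigma> (s # ss) \<Sigma>'"
| LoopDone: "\<not> j < i \<Longrightarrow> exec_loop x s i j \<Sigma> \<Sigma>"
| LoopStep: "j < i \<Longrightarrow> exec (\<Sigma>(x \<mapsto> VInt j)) s \<Sigma>1 \<Longrightarrow> exec_loop x s i (j + 1) \<Sigma>1 \<Sigma>' \<Longrightarrow>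
             exec_loop x s i j \<Sigma> \<Sigma>'"

(* prog_sem p vs w: program p on inputs vs outputs w, i.e. [[p]](vs) = w *)
inductive prog_sem :: "prog \<Rightarrow> int list \<Rightarrow> int \<Rightarrow> bool" where
  "length vs = length xs \<Longrightarrow>
   exec_seq (Map.empty(xs [\<mapsto>] map VInt vs)) ss \<Sigma>' \<Longrightarrow>
   eval \<Sigma>' e (VInt w) \<Longrightarrow>
   prog_sem (Prog xs ss e) vs w"

type_synonym tenv = "string \<Rightarrow> ty option"

definition ty_sup :: "ty list \<Rightarrow> ty" where
  "ty_sup ts = (if (\<forall>t\<in>set ts. t = IInt) then IInt else TInt)"

inductive op_typ :: "oper \<Rightarrow> ty list \<Rightarrow> ty \<Rightarrow> bool" where
  "op_typ Not [TBool] TBool"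
| "op_typ And [TBool, TBool] TBool"
| "op_typ Or [TBool, TBool] TBool"
| "c \<in> {Ge, Le, Gt, Lt, Eq, Neq} \<Longrightarrow> is_int_ty t1 \<Longrightarrow> is_int_ty t2 \<Longrightarrow> op_typ c [t1, t2] TBool"
| "c \<in> {Plus, Minus, Div, Mod} \<Longrightarrow> is_int_ty t1 \<Longrightarrow> is_int_ty t2 \<Longrightarrow>
   op_typ c [t1, t2] (ty_sup [t1, t2])"
| "is_int_ty t \<Longrightarrow> op_typ Neg [t] (ty_sup [t])"
| "op_typ Size [IInt] IInt"

inductive etyp :: "tenv \<Rightarrow> bool \<Rightarrow> expr \<Rightarrow> ty \<Rightarrow> bool" where
  TyVar: "\<Gamma> x = Some t \<Longrightarrow> etyp \<Gamma> l (EVar x) t"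
| TyConst: "etyp \<Gamma> l (EConst n) IInt"
| TyTrue: "etyp \<Gamma> l ETrue TBool"
| TyFalse: "etyp \<Gamma> l EFalse TBool"
| TyOp: "list_all2 (etyp \<Gamma> l) es ts \<Longrightarrow> op_typ f ts t \<Longrightarrow> etyp \<Gamma> l (EOp f es) t"
| TyParen: "etyp \<Gamma> l e t \<Longrightarrow> etyp \<Gamma> l (EParen e) t"
monos list_all2_mono

definition compat :: "ty \<Rightarrow> ty \<Rightarrow> bool" where
  "compat t t' \<longleftrightarrow> (is_int_ty t \<and> is_int_ty t') \<or> (t = TBool \<and> t' = TBool)"

inductive styp :: "tenv \<Rightarrow> bool \<Rightarrow> stmt \<Rightarrow> tenv \<Rightarrow> bool"
  and styp_seq :: "tenv \<Rightarrow> bool \<Rightarrow> stmt list \<Rightarrow> tenv \<Rightarrow> bool" where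
  TsDecl: "x \<notin> dom \<Gamma> \<Longrightarrow> \<not> (l \<and> t = IInt) \<Longrightarrow> styp \<Gamma> l (SDecl t x) (\<Gamma>(x \<mapsto> t))"
| TsAssign: "\<Gamma> x = Some tx \<Longrightarrow> \<not> (l \<and> tx = IInt) \<Longrightarrow> etyp \<Gamma> l e t \<Longrightarrow> compat t tx \<Longrightarrow>
             styp \<Gamma> l (SAssign x e) \<Gamma>"
| TsBlock: "styp_seq \<Gamma> l ss \<Gamma>' \<Longrightarrow> styp \<Gamma> l (SBlock ss) \<Gamma>"
| TsIf: "etyp \<Gamma> l e TBool \<Longrightarrow> styp \<Gamma> l s1 \<Gamma>1 \<Longrightarrow> styp \<Gamma> l s2 \<Gamma>2 \<Longrightarrow>
         styp \<Gamma> l (SIf e s1 s2) \<Gamma>"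
| TsFor: "etyp \<Gamma> l (EOp Size [e]) IInt \<Longrightarrow> x \<notin> dom \<Gamma> \<Longrightarrow> styp (\<Gamma>(x \<mapsto> IInt)) True s \<Gamma>' \<Longrightarrow>
          styp \<Gamma> l (SFor x e s) \<Gamma>"
| TsNil: "styp_seq \<Gamma> l [] \<Gamma>"
| TsCons: "styp \<Gamma> l s \<Gamma>1 \<Longrightarrow> styp_seq \<Gamma>1 l ss \<Gamma>' \<Longrightarrow> styp_seq \<Gamma> l (s # ss) \<Gamma>'"

inductive well_typed :: "prog \<Rightarrow> bool" where
  "styp_seq (Map.empty(xs [\<mapsto>] replicate (length xs) TInt)) False ss \<Gamma>' \<Longrightarrow>
   etyp \<Gamma>' False e t \<Longrightarrow> is_int_ty t \<Longrightarrow> well_typed (Prog xs ss e)"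

end

theory Submission
  imports Defs
begin

text \<open>
  Keep two bounds on the sizes of the integers in the store: \<open>k\<close> for the variables of
  type \<open>iint\<close> and \<open>m\<close> for all integer values. An operator application adds at most one
  bit, so an expression raises these bounds by a constant, its weight. Inside a loop body
  \<open>iint\<close> variables cannot be assigned, hence \<open>k\<close> stays fixed and every statement adds
  at most \<open>c (k + 1)\<^sup>d\<close> to \<open>m\<close>; a loop runs \<open>size(e) \<le> k + weight e\<close> times, which
  is again such a polynomial in \<open>k\<close>. Outside loops a statement maps a common bound \<open>m\<close>
  to \<open>c (m + 1)\<^sup>d\<close>, polynomials compose, and the input store is bounded by the input size.
\<close>

section \<open>Sizes of integers\<close>

lemma sz_le_iff: "sz v \<le> n \<longleftrightarrow> \<bar>v\<bar> < 2 ^ n"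
proof -
  have pos: "0 < real_of_int (\<bar>v\<bar> + 1)" by simp
  have "sz v \<le> n \<longleftrightarrow> log 2 (real_of_int (\<bar>v\<bar> + 1)) \<le> real n"
    unfolding sz_def by (simp add: ceiling_le_iff nat_le_iff)
  also have "\<dots> \<longleftrightarrow> real_of_int (\<bar>v\<bar> + 1) \<le> 2 powr real n"
    using log_le_iff[OF _ pos] by simp
  also have "\<dots> \<longleftrightarrow> real_of_int (\<bar>v\<bar> + 1) \<le> real_of_int (2 ^ n)"
    by (simp add: powr_realpow)
  also have "\<dots> \<longleftrightarrow> \<bar>v\<bar> < 2 ^ n" by linarith
  finally show ?thesis .
qed

lemma sz_mono: "\<bar>a\<bar> \<le> \<bar>b\<bar> \<Longrightarrow> sz a \<le> sz b"
  by (meson le_less_trans order_refl sz_le_iff)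

lemma sz_0 [simp]: "sz 0 = 0"
  by (simp add: sz_def)

lemma sz_minus [simp]: "sz (- a) = sz a"
  by (simp add: sz_def)

lemma sz_of_nat_le: "sz (int n) \<le> n"
proof -
  have "int n < int (2 ^ n)" using less_exp by (simp only: of_nat_less_iff)
  then show ?thesis by (simp add: sz_le_iff)
qed

lemma sz_add_le: "sz a \<le> n \<Longrightarrow> sz b \<le> n \<Longrightarrow> sz (a + b) \<le> Suc n"
  using abs_triangle_ineq[of a b] by (simp add: sz_le_iff)

lemma abs_tdiv_le: "\<bar>tdiv a b\<bar> \<le> \<bar>a\<bar>"
proof (cases "b = 0")
  case False
  have "\<bar>tdiv a b\<bar> = \<bar>sgn a * sgn b\<bar> * (\<bar>a\<bar> div \<bar>b\<bar>)"
    using False by (simp add: tdiv_def abs_mult div_int_pos_iff)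
  also have "\<dots> \<le> \<bar>a\<bar> div \<bar>b\<bar>"
    by (simp add: abs_mult abs_sgn_eq mult_le_one div_int_pos_iff)
  also have "\<dots> \<le> \<bar>a\<bar>"
    by (cases "a = 0") (simp_all add: int_div_le_self)
  finally show ?thesis .
qed (simp add: tdiv_def)

lemma abs_tmod_le: "\<bar>tmod a b\<bar> \<le> \<bar>a\<bar>"
proof (cases "b = 0")
  case False
  have "b * sgn b = \<bar>b\<bar>" by (simp add: sgn_if)
  then have "tmod a b = a - sgn a * (\<bar>b\<bar> * (\<bar>a\<bar> div \<bar>b\<bar>))"
    using False by (simp add: tmod_def tdiv_def mult.commute mult.left_commute)
  also have "\<dots> = sgn a * (\<bar>a\<bar> mod \<bar>b\<bar>)"
    by (simp add: algebra_simps abs_mult_sgn minus_mult_div_eq_mod[symmetric])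
  moreover have "0 \<le> \<bar>a\<bar> mod \<bar>b\<bar>"
    using False by simp
  ultimately have "\<bar>tmod a b\<bar> = \<bar>sgn a\<bar> * (\<bar>a\<bar> mod \<bar>b\<bar>)"
    by (simp add: abs_mult)
  also have "\<dots> \<le> \<bar>a\<bar> mod \<bar>b\<bar>"
    by (simp add: abs_sgn_eq mult_le_one)
  also have "\<dots> \<le> \<bar>a\<bar>"
    by (simp add: zmod_le_nonneg_dividend)
  finally show ?thesis .
qed (simp add: tmod_def)

lemma apply_op_VInt_cases:
  assumes "apply_op f vs = Some (VInt i)"
  obtains (unary) a where "vs = [VInt a]" "i = - a \<or> i = int (sz a)"
  | (binary) a b where "vs = [VInt a, VInt b]"
      "i = a + b \<or> i = a - b \<or> i = tdiv a b \<or> i = tmod a b"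
  using assms
  by (auto simp: apply_op_def split: list.splits val.splits oper.splits if_splits)

lemma apply_op_sz_le:
  assumes "apply_op f vs = Some (VInt i)" and "\<And>a. VInt a \<in> set vs \<Longrightarrow> sz a \<le> n"
  shows "sz i \<le> Suc n"
  using assms(1)
proof (cases rule: apply_op_VInt_cases)
  case (unary a)
  then have "sz a \<le> n" using assms(2) by simp
  then show ?thesis using unary sz_of_nat_le[of "sz a"] by auto
next
  case (binary a b)
  then have "sz a \<le> n" "sz b \<le> n" using assms(2) by auto
  moreover have "sz (tdiv a b) \<le> sz a" "sz (tmod a b) \<le> sz a"
    by (intro sz_mono abs_tdiv_le abs_tmod_le)+
  ultimately show ?thesis
    using binary sz_add_le[of a n b] sz_add_le[of a n "- b"] by auto
qed

fun expr_weight :: "expr \<Rightarrow> nat" where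
  "expr_weight (EConst n) = sz (int n)"
| "expr_weight (EOp f es) = Suc (sum_list (map expr_weight es))"
| "expr_weight (EParen e) = expr_weight e"
| "expr_weight _ = 0"

fun expr_vars :: "expr \<Rightarrow> string set" where
  "expr_vars (EVar x) = {x}"
| "expr_vars (EOp f es) = \<Union> (set (map expr_vars es))"
| "expr_vars (EParen e) = expr_vars e"
| "expr_vars _ = {}"

lemma eval_sz_le:
  assumes "eval \<Sigma> e v" "v = VInt a"
    and "\<And>x b. x \<in> expr_vars e \<Longrightarrow> \<Sigma> x = Some (VInt b) \<Longrightarrow> sz b \<le> n"
  shows "sz a \<le> n + expr_weight e"
  using assms
proof (induction arbitrary: a rule: eval.induct)
  case (EvOp \<Sigma> es vs f v)
  let ?S = "sum_list (map expr_weight es)"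
  have "sz b \<le> n + ?S" if b: "VInt b \<in> set vs" for b
  proof -
    have "length es = length vs"
      using EvOp.IH by (rule list_all2_lengthD)
    then obtain j where j: "j < length es" "vs ! j = VInt b"
      using b by (auto simp: in_set_conv_nth)
    have "sz b \<le> n + expr_weight (es ! j)"
      using EvOp.IH EvOp.prems(2) j nth_mem[of j es] by (fastforce simp: list_all2_conv_all_nth)
    also have "expr_weight (es ! j) \<le> ?S"
      using j(1) by (metis elem_le_sum_list length_map nth_map)
    finally show ?thesis by simp
  qed
  then show ?case using apply_op_sz_le EvOp by fastforce
qed auto

lemma op_typ_IInt_args: "op_typ f ts IInt \<Longrightarrow> t \<in> set ts \<Longrightarrow> t = IInt"
  by (auto elim!: op_typ.cases simp: ty_sup_def split: if_splits)

lemma etyp_IInt_vars: "etyp \<Gamma> l e t \<Longrightarrow> t = IInt \<Longrightarrow> x \<in> expr_vars e \<Longrightarrow> \<Gamma> x = Some IInt"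
proof (induction rule: etyp.induct)
  case (TyOp \<Gamma> l es ts f t)
  then obtain j where j: "j < length es" "x \<in> expr_vars (es ! j)"
    by (auto simp: in_set_conv_nth)
  moreover have "ts ! j = IInt"
    using TyOp j op_typ_IInt_args by (auto simp: list_all2_conv_all_nth)
  ultimately show ?case using TyOp.IH by (auto simp: list_all2_conv_all_nth)
qed auto

inductive_cases EvOpE: "eval \<Sigma> (EOp f es) v"

lemma eval_Size_VInt:
  assumes "eval \<Sigma> (EOp Size [e]) (VInt i)"
  obtains a where "eval \<Sigma> e (VInt a)" "i = int (sz a)"
proof -
  from assms obtain v where "eval \<Sigma> e v" "apply_op Size [v] = Some (VInt i)"
    by (auto elim!: EvOpE simp: list_all2_Cons1)
  then show ?thesis
    using that by (cases v) (auto simp: apply_op_def)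
qed

inductive_cases TyOpE: "etyp \<Gamma> l (EOp f es) t"

lemma etyp_Size_arg:
  assumes "etyp \<Gamma> l (EOp Size [e]) t"
  shows "etyp \<Gamma> l e IInt"
proof -
  obtain ts where "list_all2 (etyp \<Gamma> l) [e] ts" "op_typ Size ts t"
    using assms by (elim TyOpE)
  moreover from this(2) have "ts = [IInt]"
    by (cases rule: op_typ.cases) auto
  ultimately show ?thesis
    by simp
qed

definition bounded_store :: "tenv \<Rightarrow> store \<Rightarrow> nat \<Rightarrow> nat \<Rightarrow> bool" where
  "bounded_store \<Gamma> \<Sigma> k m \<longleftrightarrow>
     (\<forall>x a. \<Gamma> x = Some IInt \<longrightarrow> \<Sigma> x = Some (VInt a) \<longrightarrow> sz a \<le> k) \<and>
     (\<forall>x a. \<Sigma> x = Some (VInt a) \<longrightarrow> sz a \<le> m)"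

lemma bounded_store_mono:
  "bounded_store \<Gamma> \<Sigma> k m \<Longrightarrow> \<Gamma>' \<subseteq>\<^sub>m \<Gamma> \<Longrightarrow> k \<le> k' \<Longrightarrow> m \<le> m' \<Longrightarrow> bounded_store \<Gamma>' \<Sigma> k' m'"
  unfolding bounded_store_def map_le_def by (metis domI order_trans)

lemma bounded_store_upd:
  assumes "bounded_store \<Gamma> \<Sigma> k m"
    and "\<And>a. v = VInt a \<Longrightarrow> sz a \<le> m" and "\<And>a. t = IInt \<Longrightarrow> v = VInt a \<Longrightarrow> sz a \<le> k"
  shows "bounded_store (\<Gamma>(x \<mapsto> t)) (\<Sigma>(x \<mapsto> v)) k m"
  using assms unfolding bounded_store_def by auto

lemma bounded_store_frame:
  assumes "bounded_store \<Gamma> \<Sigma>' k' m'" "bounded_store \<Gamma> \<Sigma> k m"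
    and "\<forall>y. \<Gamma> y = Some IInt \<longrightarrow> \<Sigma>' y = \<Sigma> y"
  shows "bounded_store \<Gamma> \<Sigma>' k m'"
  using assms unfolding bounded_store_def by metis

lemma eval_sz_le_bound:
  "bounded_store \<Gamma> \<Sigma> k m \<Longrightarrow> eval \<Sigma> e (VInt a) \<Longrightarrow> sz a \<le> m + expr_weight e"
  unfolding bounded_store_def by (blast intro: eval_sz_le)

lemma eval_IInt_sz_le_bound:
  "bounded_store \<Gamma> \<Sigma> k m \<Longrightarrow> etyp \<Gamma> l e IInt \<Longrightarrow> eval \<Sigma> e (VInt a) \<Longrightarrow> sz a \<le> k + expr_weight e"
  unfolding bounded_store_def by (blast intro: eval_sz_le dest: etyp_IInt_vars)

inductive_cases ExDeclE: "exec \<Sigma> (SDecl t x) \<Sigma>'"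
inductive_cases ExAssignE: "exec \<Sigma> (SAssign x e) \<Sigma>'"
inductive_cases ExBlockE: "exec \<Sigma> (SBlock ss) \<Sigma>'"
inductive_cases ExIfE: "exec \<Sigma> (SIf e s1 s2) \<Sigma>'"
inductive_cases ExForE: "exec \<Sigma> (SFor x e s) \<Sigma>'"
inductive_cases SeqNilE: "exec_seq \<Sigma> [] \<Sigma>'"
inductive_cases SeqConsE: "exec_seq \<Sigma> (s # ss) \<Sigma>'"

inductive_cases TsDeclE: "styp \<Gamma> l (SDecl t x) \<Gamma>'"
inductive_cases TsAssignE: "styp \<Gamma> l (SAssign x e) \<Gamma>'"
inductive_cases TsBlockE: "styp \<Gamma> l (SBlock ss) \<Gamma>'"
inductive_cases TsIfE: "styp \<Gamma> l (SIf e s1 s2) \<Gamma>'"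
inductive_cases TsForE: "styp \<Gamma> l (SFor x e s) \<Gamma>'"
inductive_cases TsConsE: "styp_seq \<Gamma> l (s # ss) \<Gamma>'"

lemma styp_map_le:
  "styp \<Gamma> l s \<Gamma>' \<Longrightarrow> \<Gamma> \<subseteq>\<^sub>m \<Gamma>'"
  "styp_seq \<Gamma> l ss \<Gamma>' \<Longrightarrow> \<Gamma> \<subseteq>\<^sub>m \<Gamma>'"
  by (induction rule: styp_styp_seq.inducts) (auto simp: map_le_def, metis domI)

lemma exec_preserves_IInt_vars:
  "exec \<Sigma> s \<Sigma>' \<Longrightarrow> styp \<Gamma> True s \<Gamma>' \<Longrightarrow> \<Gamma> y = Some IInt \<Longrightarrow> \<Sigma>' y = \<Sigma> y"
  "exec_seq \<Sigma> ss \<Sigma>' \<Longrightarrow> styp_seq \<Gamma> True ss \<Gamma>' \<Longrightarrow> \<Gamma> y = Some IInt \<Longrightarrow> \<Sigma>' y = \<Sigma> y"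
  "exec_loop x s i j \<Sigma> \<Sigma>' \<Longrightarrow> styp \<Gamma> True s \<Gamma>' \<Longrightarrow> \<Gamma> y = Some IInt \<Longrightarrow> y \<noteq> x \<Longrightarrow>
     \<Sigma>' y = \<Sigma> y"
proof (induction arbitrary: \<Gamma> \<Gamma>' and \<Gamma> \<Gamma>' and \<Gamma> \<Gamma>' rule: exec_exec_seq_exec_loop.inducts)
  case (ExFor \<Sigma> e i x s \<Sigma>')
  from ExFor.prems(1) obtain \<Gamma>b where "x \<notin> dom \<Gamma>" "styp (\<Gamma>(x \<mapsto> IInt)) True s \<Gamma>b"
    by (elim TsForE)
  moreover from this(1) have "y \<noteq> x"
    using ExFor.prems(2) by auto
  ultimately show ?case
    using ExFor.IH ExFor.prems(2) by (metis fun_upd_other)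
next
  case (SeqCons \<Sigma> s \<Sigma>1 ss \<Sigma>')
  from SeqCons.prems(1) obtain \<Gamma>1 where "styp \<Gamma> True s \<Gamma>1" "styp_seq \<Gamma>1 True ss \<Gamma>'"
    by (elim TsConsE)
  with SeqCons show ?case
    using styp_map_le(1) by (metis map_le_def domI)
next
  case (LoopStep j i x \<Sigma> s \<Sigma>1 \<Sigma>')
  then show ?case by (metis fun_upd_other)
qed (auto elim: TsDeclE TsAssignE TsBlockE TsIfE)

lemma exec_loop_induct [consumes 1, case_names Done Step]:
  assumes "exec_loop x s i j \<Sigma> \<Sigma>'"
    and "\<And>j \<Sigma>. \<not> j < i \<Longrightarrow> P j \<Sigma> \<Sigma>"
    and "\<And>j \<Sigma> \<Sigma>1 \<Sigma>'. j < i \<Longrightarrow> exec (\<Sigma>(x \<mapsto> VInt j)) s \<Sigma>1 \<Longrightarrow>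
        exec_loop x s i (j + 1) \<Sigma>1 \<Sigma>' \<Longrightarrow> P (j + 1) \<Sigma>1 \<Sigma>' \<Longrightarrow> P j \<Sigma> \<Sigma>'"
  shows "P j \<Sigma> \<Sigma>'"
proof -
  have "exec_loop x' s' i' j \<Sigma> \<Sigma>' \<Longrightarrow> x' = x \<longrightarrow> s' = s \<longrightarrow> i' = i \<longrightarrow> P j \<Sigma> \<Sigma>'" for x' s' i'
    by (induction rule: exec_exec_seq_exec_loop.inducts(3)
          [where ?P1.0 = "\<lambda>_ _ _. True" and ?P2.0 = "\<lambda>_ _ _. True"])
       (auto intro: assms(2,3))
  then show ?thesis using assms(1) by blast
qed

lemma power_bound_mono: "(c::nat) \<le> c' \<Longrightarrow> d \<le> d' \<Longrightarrow> c * (k + 1) ^ d \<le> c' * (k + 1) ^ d'"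
  by (intro mult_mono power_increasing) auto

lemma loop_cost_le:
  fixes n K k e c d :: nat
  assumes "n \<le> K" "K \<le> k + e"
  shows "n * (K + c * (K + 1) ^ d) \<le> (c + 1) * (e + 1) ^ (d + 2) * (k + 1) ^ (d + 2)"
proof -
  have "K + 1 \<le> (K + 1) ^ (d + 1)"
    by (rule self_le_power) auto
  moreover have "c * (K + 1) ^ d \<le> c * (K + 1) ^ (d + 1)"
    by (intro mult_le_mono2 power_increasing) auto
  ultimately have "K + c * (K + 1) ^ d \<le> (c + 1) * (K + 1) ^ (d + 1)"
    by (simp add: algebra_simps)
  then have "n * (K + c * (K + 1) ^ d) \<le> (K + 1) * ((c + 1) * (K + 1) ^ (d + 1))"
    using assms(1) by (intro mult_le_mono) auto
  also have "\<dots> = (c + 1) * (K + 1) ^ (d + 2)"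
    by (simp add: algebra_simps)
  also have "\<dots> \<le> (c + 1) * ((e + 1) * (k + 1)) ^ (d + 2)"
  proof -
    have "K + 1 \<le> (e + 1) * (k + 1)"
      using assms(2) by (simp add: algebra_simps)
    then show ?thesis
      by (intro mult_le_mono2 power_mono) simp_all
  qed
  also have "\<dots> = (c + 1) * (e + 1) ^ (d + 2) * (k + 1) ^ (d + 2)"
    by (simp only: power_mult_distrib mult.assoc)
  finally show ?thesis .
qed

lemma power_bound_compose:
  "(c2::nat) * (c1 * (m + 1) ^ d1 + 1) ^ d2 \<le> c2 * (c1 + 1) ^ d2 * (m + 1) ^ (d1 * d2)"
proof -
  have "c1 * (m + 1) ^ d1 + 1 \<le> (c1 + 1) * (m + 1) ^ d1"
    by (simp add: algebra_simps)
  then have "(c1 * (m + 1) ^ d1 + 1) ^ d2 \<le> ((c1 + 1) * (m + 1) ^ d1) ^ d2"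
    by (rule power_mono) simp
  also have "\<dots> = (c1 + 1) ^ d2 * (m + 1) ^ (d1 * d2)"
    by (simp only: power_mult_distrib power_mult)
  finally show ?thesis
    by (simp add: mult.assoc)
qed

lemma power_bound_absorb:
  assumes "0 < d"
  shows "(m::nat) + a + c * (m + 1) ^ d \<le> (c + a + 1) * (m + 1) ^ d"
proof -
  have "m + a + c * X \<le> (c + a + 1) * X" if "m + 1 \<le> X" for X
  proof -
    have "a \<le> a * X"
      using mult_le_mono2[of 1 X a] that by simp
    moreover have "(c + a + 1) * X = c * X + a * X + X"
      by (simp add: algebra_simps)
    ultimately show ?thesis
      using that by linarith
  qed
  moreover have "m + 1 \<le> (m + 1) ^ d"
    using assms by (rule self_le_power[rotated]) simp
  ultimately show ?thesis .
qed

section \<open>Statements inside loops\<close>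

definition additive_bound :: "tenv \<Rightarrow> (store \<Rightarrow> store \<Rightarrow> bool) \<Rightarrow> tenv \<Rightarrow> nat \<Rightarrow> nat \<Rightarrow> bool" where
  "additive_bound \<Gamma> R \<Gamma>' c d \<longleftrightarrow> (\<forall>\<Sigma> \<Sigma>' k m. R \<Sigma> \<Sigma>' \<longrightarrow> bounded_store \<Gamma> \<Sigma> k m \<longrightarrow>
     bounded_store \<Gamma>' \<Sigma>' k (m + c * (k + 1) ^ d))"

lemma additive_bound_weaken:
  assumes "additive_bound \<Gamma> R \<Gamma>1 c d" "\<And>\<Sigma> \<Sigma>'. R' \<Sigma> \<Sigma>' \<Longrightarrow> R \<Sigma> \<Sigma>'"
    and "\<Gamma>' \<subseteq>\<^sub>m \<Gamma>1" "c \<le> c'" "d \<le> d'"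
  shows "additive_bound \<Gamma> R' \<Gamma>' c' d'"
proof -
  have "c * (k + 1) ^ d \<le> c' * (k + 1) ^ d'" for k
    using assms(4,5) by (rule power_bound_mono)
  then show ?thesis
    using assms(1-3) unfolding additive_bound_def by (meson add_left_mono bounded_store_mono order_refl)
qed

lemma additive_bound_disj:
  "additive_bound \<Gamma> R1 \<Gamma>' c d \<Longrightarrow> additive_bound \<Gamma> R2 \<Gamma>' c d \<Longrightarrow>
    additive_bound \<Gamma> (\<lambda>\<Sigma> \<Sigma>'. R1 \<Sigma> \<Sigma>' \<or> R2 \<Sigma> \<Sigma>') \<Gamma>' c d"
  unfolding additive_bound_def by blast

lemma additive_bound_relcompp:
  assumes "additive_bound \<Gamma> R1 \<Gamma>1 c1 d1" "additive_bound \<Gamma>1 R2 \<Gamma>2 c2 d2"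
  shows "additive_bound \<Gamma> (R1 OO R2) \<Gamma>2 (c1 + c2) (d1 + d2)"
  unfolding additive_bound_def
proof (intro allI impI)
  fix \<Sigma> \<Sigma>' k m
  assume "(R1 OO R2) \<Sigma> \<Sigma>'" "bounded_store \<Gamma> \<Sigma> k m"
  then obtain \<Sigma>1 where "R1 \<Sigma> \<Sigma>1" "R2 \<Sigma>1 \<Sigma>'" "bounded_store \<Gamma> \<Sigma> k m"
    by blast
  then have store: "bounded_store \<Gamma>2 \<Sigma>' k (m + c1 * (k + 1) ^ d1 + c2 * (k + 1) ^ d2)"
    using assms unfolding additive_bound_def by blast
  have "c1 * (k + 1) ^ d1 + c2 * (k + 1) ^ d2 \<le> (c1 + c2) * (k + 1) ^ (d1 + d2)"
    using power_bound_mono[of c1 c1 d1 "d1 + d2" k] power_bound_mono[of c2 c2 d2 "d1 + d2" k]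
    unfolding add_mult_distrib by (intro add_mono) simp_all
  then show "bounded_store \<Gamma>2 \<Sigma>' k (m + (c1 + c2) * (k + 1) ^ (d1 + d2))"
    by (intro bounded_store_mono[OF store map_le_refl]) simp_all
qed

lemma exec_loop_bound:
  assumes "exec_loop x s i j \<Sigma> \<Sigma>'"
    and body: "additive_bound (\<Gamma>(x \<mapsto> IInt)) (\<lambda>\<Sigma> \<Sigma>'. exec \<Sigma> s \<Sigma>') \<Gamma>b c d"
    and "\<Gamma> \<subseteq>\<^sub>m \<Gamma>b" "i \<le> int K" "0 \<le> j" "bounded_store \<Gamma> \<Sigma> K m"
  shows "bounded_store \<Gamma> \<Sigma>' K (m + nat (i - j) * (K + c * (K + 1) ^ d))"
  using assms(1,5,6)
proof (induction arbitrary: m rule: exec_loop_induct)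
  case (Done j \<Sigma>)
  then show ?case by (auto intro: bounded_store_mono)
next
  case (Step j \<Sigma> \<Sigma>1 \<Sigma>')
  let ?\<delta> = "K + c * (K + 1) ^ d"
  have "sz j \<le> K"
    using Step.hyps(1) Step.prems(1) \<open>i \<le> int K\<close> sz_of_nat_le[of "nat j"] by simp
  moreover have "bounded_store \<Gamma> \<Sigma> K (m + K)"
    using Step.prems(2) by (rule bounded_store_mono) auto
  ultimately have "bounded_store (\<Gamma>(x \<mapsto> IInt)) (\<Sigma>(x \<mapsto> VInt j)) K (m + K)"
    by (auto intro: bounded_store_upd)
  then have "bounded_store \<Gamma>b \<Sigma>1 K (m + K + c * (K + 1) ^ d)"
    using body Step.hyps(2) unfolding additive_bound_def by blast
  then have "bounded_store \<Gamma> \<Sigma>1 K (m + ?\<delta>)"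
    using \<open>\<Gamma> \<subseteq>\<^sub>m \<Gamma>b\<close> by (rule bounded_store_mono) (simp_all add: add.assoc)
  then have "bounded_store \<Gamma> \<Sigma>' K (m + ?\<delta> + nat (i - (j + 1)) * ?\<delta>)"
    using Step.IH Step.prems(1) by simp
  moreover have "nat (i - j) = Suc (nat (i - (j + 1)))"
    using Step.hyps(1) by linarith
  ultimately show ?case by (simp add: algebra_simps)
qed

lemma exec_for_bound:
  assumes "exec \<Sigma> (SFor x e s) \<Sigma>'" "etyp \<Gamma> l (EOp Size [e]) IInt"
    and "additive_bound (\<Gamma>(x \<mapsto> IInt)) (\<lambda>\<Sigma> \<Sigma>'. exec \<Sigma> s \<Sigma>') \<Gamma>b c d" "\<Gamma> \<subseteq>\<^sub>m \<Gamma>b"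
    and "bounded_store \<Gamma> \<Sigma> k m"
  shows "bounded_store \<Gamma> \<Sigma>' (k + expr_weight e)
           (m + (c + 1) * (expr_weight e + 1) ^ (d + 2) * (k + 1) ^ (d + 2))"
proof -
  let ?K = "k + expr_weight e"
  obtain i where i: "eval \<Sigma> (EOp Size [e]) (VInt i)" "exec_loop x s i 0 \<Sigma> \<Sigma>'"
    using assms(1) by (elim ExForE)
  then obtain a where a: "eval \<Sigma> e (VInt a)" "i = int (sz a)"
    by (elim eval_Size_VInt)
  have "sz a \<le> ?K"
    using assms(5) etyp_Size_arg[OF assms(2)] a(1) by (rule eval_IInt_sz_le_bound)
  have "bounded_store \<Gamma> \<Sigma> ?K m"
    using assms(5) by (rule bounded_store_mono) auto
  then have store: "bounded_store \<Gamma> \<Sigma>' ?K (m + nat (i - 0) * (?K + c * (?K + 1) ^ d))"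
    using exec_loop_bound[OF i(2) assms(3,4)] a(2) \<open>sz a \<le> ?K\<close> by simp
  have "nat (i - 0) * (?K + c * (?K + 1) ^ d)
      \<le> (c + 1) * (expr_weight e + 1) ^ (d + 2) * (k + 1) ^ (d + 2)"
    by (rule loop_cost_le) (use a(2) \<open>sz a \<le> ?K\<close> in auto)
  then show ?thesis
    by (intro bounded_store_mono[OF store map_le_refl]) simp_all
qed

lemma styp_additive_bound:
  "styp \<Gamma> l s \<Gamma>' \<Longrightarrow> l \<Longrightarrow> \<exists>c d. additive_bound \<Gamma> (\<lambda>\<Sigma> \<Sigma>'. exec \<Sigma> s \<Sigma>') \<Gamma>' c d"
  "styp_seq \<Gamma> l ss \<Gamma>' \<Longrightarrow> l \<Longrightarrow> \<exists>c d. additive_bound \<Gamma> (\<lambda>\<Sigma> \<Sigma>'. exec_seq \<Sigma> ss \<Sigma>') \<Gamma>' c d"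
proof (induction rule: styp_styp_seq.inducts)
  case (TsDecl x \<Gamma> l t)
  have "additive_bound \<Gamma> (\<lambda>\<Sigma> \<Sigma>'. exec \<Sigma> (SDecl t x) \<Sigma>') (\<Gamma>(x \<mapsto> t)) 0 0"
    unfolding additive_bound_def
    by (auto elim!: ExDeclE intro!: bounded_store_upd simp: default_val_def split: if_splits)
  then show ?case by blast
next
  case (TsAssign \<Gamma> x tx l e t)
  have "additive_bound \<Gamma> (\<lambda>\<Sigma> \<Sigma>'. exec \<Sigma> (SAssign x e) \<Sigma>') \<Gamma> (expr_weight e) 0"
    unfolding additive_bound_def
  proof (intro allI impI)
    fix \<Sigma> \<Sigma>' k m
    assume "exec \<Sigma> (SAssign x e) \<Sigma>'" and store: "bounded_store \<Gamma> \<Sigma> k m"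
    then obtain v where v: "eval \<Sigma> e v" "\<Sigma>' = \<Sigma>(x \<mapsto> v)"
      by (elim ExAssignE)
    have "bounded_store \<Gamma> \<Sigma> k (m + expr_weight e)"
      using store by (rule bounded_store_mono) simp_all
    then have "bounded_store (\<Gamma>(x \<mapsto> tx)) \<Sigma>' k (m + expr_weight e)"
      unfolding v(2) by (rule bounded_store_upd) (use TsAssign v store eval_sz_le_bound in auto)
    then show "bounded_store \<Gamma> \<Sigma>' k (m + expr_weight e * (k + 1) ^ 0)"
      using TsAssign(1) by (simp add: map_upd_triv)
  qed
  then show ?case by blast
next
  case (TsBlock \<Gamma> l ss \<Gamma>')
  then obtain c d where "additive_bound \<Gamma> (\<lambda>\<Sigma> \<Sigma>'. exec_seq \<Sigma> ss \<Sigma>') \<Gamma>' c d"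
    by blast
  then have "additive_bound \<Gamma> (\<lambda>\<Sigma> \<Sigma>'. exec \<Sigma> (SBlock ss) \<Sigma>') \<Gamma> c d"
    by (rule additive_bound_weaken) (auto elim: ExBlockE intro: styp_map_le(2)[OF TsBlock.hyps])
  then show ?case by blast
next
  case (TsIf \<Gamma> l e s1 \<Gamma>1 s2 \<Gamma>2)
  then obtain c1 d1 c2 d2
    where bound1: "additive_bound \<Gamma> (\<lambda>\<Sigma> \<Sigma>'. exec \<Sigma> s1 \<Sigma>') \<Gamma>1 c1 d1"
      and bound2: "additive_bound \<Gamma> (\<lambda>\<Sigma> \<Sigma>'. exec \<Sigma> s2 \<Sigma>') \<Gamma>2 c2 d2"
    by blast
  have "additive_bound \<Gamma> (\<lambda>\<Sigma> \<Sigma>'. exec \<Sigma> s1 \<Sigma>') \<Gamma> (c1 + c2) (d1 + d2)"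
    using bound1 by (rule additive_bound_weaken) (simp_all add: styp_map_le(1)[OF TsIf.hyps(2)])
  moreover have "additive_bound \<Gamma> (\<lambda>\<Sigma> \<Sigma>'. exec \<Sigma> s2 \<Sigma>') \<Gamma> (c1 + c2) (d1 + d2)"
    using bound2 by (rule additive_bound_weaken) (simp_all add: styp_map_le(1)[OF TsIf.hyps(3)])
  ultimately have "additive_bound \<Gamma> (\<lambda>\<Sigma> \<Sigma>'. exec \<Sigma> s1 \<Sigma>' \<or> exec \<Sigma> s2 \<Sigma>') \<Gamma> (c1 + c2) (d1 + d2)"
    by (rule additive_bound_disj)
  then have "additive_bound \<Gamma> (\<lambda>\<Sigma> \<Sigma>'. exec \<Sigma> (SIf e s1 s2) \<Sigma>') \<Gamma> (c1 + c2) (d1 + d2)"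
    by (rule additive_bound_weaken) (auto elim: ExIfE)
  then show ?case by blast
next
  case (TsFor \<Gamma> l e x s \<Gamma>b)
  then obtain c d where body: "additive_bound (\<Gamma>(x \<mapsto> IInt)) (\<lambda>\<Sigma> \<Sigma>'. exec \<Sigma> s \<Sigma>') \<Gamma>b c d"
    by blast
  have "\<Gamma> \<subseteq>\<^sub>m \<Gamma>(x \<mapsto> IInt)"
    using TsFor.hyps(2) by (auto simp: map_le_def)
  then have "\<Gamma> \<subseteq>\<^sub>m \<Gamma>b"
    using styp_map_le(1)[OF TsFor.hyps(3)] by (rule map_le_trans)
  have "additive_bound \<Gamma> (\<lambda>\<Sigma> \<Sigma>'. exec \<Sigma> (SFor x e s) \<Sigma>') \<Gamma>
      ((c + 1) * (expr_weight e + 1) ^ (d + 2)) (d + 2)"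
    unfolding additive_bound_def
  proof (intro allI impI)
    fix \<Sigma> \<Sigma>' k m
    assume exec: "exec \<Sigma> (SFor x e s) \<Sigma>'" and store: "bounded_store \<Gamma> \<Sigma> k m"
    have "styp \<Gamma> True (SFor x e s) \<Gamma>"
      using styp_styp_seq.TsFor[OF TsFor.hyps] TsFor.prems by simp
    then have frame: "\<forall>y. \<Gamma> y = Some IInt \<longrightarrow> \<Sigma>' y = \<Sigma> y"
      using exec_preserves_IInt_vars(1)[OF exec] by blast
    show "bounded_store \<Gamma> \<Sigma>' k (m + (c + 1) * (expr_weight e + 1) ^ (d + 2) * (k + 1) ^ (d + 2))"
      by (rule bounded_store_frame[OF exec_for_bound[OF exec TsFor.hyps(1) body \<open>\<Gamma> \<subseteq>\<^sub>m \<Gamma>b\<close> store] store frame])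
  qed
  then show ?case by blast
next
  case (TsNil \<Gamma> l)
  have "additive_bound \<Gamma> (\<lambda>\<Sigma> \<Sigma>'. exec_seq \<Sigma> [] \<Sigma>') \<Gamma> 0 0"
    unfolding additive_bound_def by (auto elim: SeqNilE)
  then show ?case by blast
next
  case (TsCons \<Gamma> l s \<Gamma>1 ss \<Gamma>')
  then obtain c1 d1 c2 d2
    where "additive_bound \<Gamma> (\<lambda>\<Sigma> \<Sigma>'. exec \<Sigma> s \<Sigma>') \<Gamma>1 c1 d1"
      and "additive_bound \<Gamma>1 (\<lambda>\<Sigma> \<Sigma>'. exec_seq \<Sigma> ss \<Sigma>') \<Gamma>' c2 d2"
    by blast
  then have "additive_bound \<Gamma> (\<lambda>\<Sigma> \<Sigma>'. exec_seq \<Sigma> (s # ss) \<Sigma>') \<Gamma>' (c1 + c2) (d1 + d2)"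
    by (rule additive_bound_weaken[OF additive_bound_relcompp]) (auto elim: SeqConsE)
  then show ?case by blast
qed

section \<open>Statements outside loops\<close>

definition polynomial_bound :: "tenv \<Rightarrow> (store \<Rightarrow> store \<Rightarrow> bool) \<Rightarrow> tenv \<Rightarrow> nat \<Rightarrow> nat \<Rightarrow> bool" where
  "polynomial_bound \<Gamma> R \<Gamma>' c d \<longleftrightarrow> (\<forall>\<Sigma> \<Sigma>' m. R \<Sigma> \<Sigma>' \<longrightarrow> bounded_store \<Gamma> \<Sigma> m m \<longrightarrow>
     bounded_store \<Gamma>' \<Sigma>' (c * (m + 1) ^ d) (c * (m + 1) ^ d))"

lemma polynomial_bound_weaken:
  assumes "polynomial_bound \<Gamma> R \<Gamma>1 c d" "\<And>\<Sigma> \<Sigma>'. R' \<Sigma> \<Sigma>' \<Longrightarrow> R \<Sigma> \<Sigma>'"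
    and "\<Gamma>' \<subseteq>\<^sub>m \<Gamma>1" "c \<le> c'" "d \<le> d'"
  shows "polynomial_bound \<Gamma> R' \<Gamma>' c' d'"
proof -
  have "c * (m + 1) ^ d \<le> c' * (m + 1) ^ d'" for m
    using assms(4,5) by (rule power_bound_mono)
  then show ?thesis
    using assms(1-3) unfolding polynomial_bound_def by (meson bounded_store_mono)
qed

lemma polynomial_bound_disj:
  "polynomial_bound \<Gamma> R1 \<Gamma>' c d \<Longrightarrow> polynomial_bound \<Gamma> R2 \<Gamma>' c d \<Longrightarrow>
    polynomial_bound \<Gamma> (\<lambda>\<Sigma> \<Sigma>'. R1 \<Sigma> \<Sigma>' \<or> R2 \<Sigma> \<Sigma>') \<Gamma>' c d"
  unfolding polynomial_bound_def by blast

lemma polynomial_bound_relcompp: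
  assumes "polynomial_bound \<Gamma> R1 \<Gamma>1 c1 d1" "polynomial_bound \<Gamma>1 R2 \<Gamma>2 c2 d2"
  shows "polynomial_bound \<Gamma> (R1 OO R2) \<Gamma>2 (c2 * (c1 + 1) ^ d2) (d1 * d2)"
  unfolding polynomial_bound_def
proof (intro allI impI)
  fix \<Sigma> \<Sigma>' m
  assume "(R1 OO R2) \<Sigma> \<Sigma>'" "bounded_store \<Gamma> \<Sigma> m m"
  then obtain \<Sigma>1 where "R1 \<Sigma> \<Sigma>1" "R2 \<Sigma>1 \<Sigma>'" "bounded_store \<Gamma> \<Sigma> m m"
    by blast
  then have "bounded_store \<Gamma>2 \<Sigma>' (c2 * (c1 * (m + 1) ^ d1 + 1) ^ d2) (c2 * (c1 * (m + 1) ^ d1 + 1) ^ d2)"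
    using assms unfolding polynomial_bound_def by blast
  then show "bounded_store \<Gamma>2 \<Sigma>' (c2 * (c1 + 1) ^ d2 * (m + 1) ^ (d1 * d2))
      (c2 * (c1 + 1) ^ d2 * (m + 1) ^ (d1 * d2))"
    by (rule bounded_store_mono[OF _ map_le_refl power_bound_compose power_bound_compose])
qed

lemma styp_polynomial_bound:
  "styp \<Gamma> l s \<Gamma>' \<Longrightarrow> \<not> l \<Longrightarrow> \<exists>c d. polynomial_bound \<Gamma> (\<lambda>\<Sigma> \<Sigma>'. exec \<Sigma> s \<Sigma>') \<Gamma>' c d"
  "styp_seq \<Gamma> l ss \<Gamma>' \<Longrightarrow> \<not> l \<Longrightarrow> \<exists>c d. polynomial_bound \<Gamma> (\<lambda>\<Sigma> \<Sigma>'. exec_seq \<Sigma> ss \<Sigma>') \<Gamma>' c d"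
proof (induction rule: styp_styp_seq.inducts)
  case (TsDecl x \<Gamma> l t)
  have "polynomial_bound \<Gamma> (\<lambda>\<Sigma> \<Sigma>'. exec \<Sigma> (SDecl t x) \<Sigma>') (\<Gamma>(x \<mapsto> t)) 1 1"
    unfolding polynomial_bound_def
  proof (intro allI impI)
    fix \<Sigma> \<Sigma>' m
    assume "exec \<Sigma> (SDecl t x) \<Sigma>'" "bounded_store \<Gamma> \<Sigma> m m"
    then have "bounded_store (\<Gamma>(x \<mapsto> t)) \<Sigma>' m m"
      by (auto elim!: ExDeclE intro!: bounded_store_upd simp: default_val_def split: if_splits)
    then show "bounded_store (\<Gamma>(x \<mapsto> t)) \<Sigma>' (1 * (m + 1) ^ 1) (1 * (m + 1) ^ 1)"
      by (rule bounded_store_mono) simp_all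
  qed
  then show ?case by blast
next
  case (TsAssign \<Gamma> x tx l e t)
  have "polynomial_bound \<Gamma> (\<lambda>\<Sigma> \<Sigma>'. exec \<Sigma> (SAssign x e) \<Sigma>') \<Gamma> (expr_weight e + 1) 1"
    unfolding polynomial_bound_def
  proof (intro allI impI)
    fix \<Sigma> \<Sigma>' m
    assume "exec \<Sigma> (SAssign x e) \<Sigma>'" and store: "bounded_store \<Gamma> \<Sigma> m m"
    then obtain v where v: "eval \<Sigma> e v" "\<Sigma>' = \<Sigma>(x \<mapsto> v)"
      by (elim ExAssignE)
    let ?B = "m + expr_weight e"
    have "bounded_store \<Gamma> \<Sigma> ?B ?B"
      using store by (rule bounded_store_mono) simp_all
    then have "bounded_store (\<Gamma>(x \<mapsto> tx)) \<Sigma>' ?B ?B"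
      unfolding v(2) by (rule bounded_store_upd) (use v store eval_sz_le_bound in auto)
    then have "bounded_store \<Gamma> \<Sigma>' ?B ?B"
      using TsAssign(1) by (simp add: map_upd_triv)
    then show "bounded_store \<Gamma> \<Sigma>' ((expr_weight e + 1) * (m + 1) ^ 1) ((expr_weight e + 1) * (m + 1) ^ 1)"
      by (rule bounded_store_mono) (simp_all add: algebra_simps)
  qed
  then show ?case by blast
next
  case (TsBlock \<Gamma> l ss \<Gamma>')
  then obtain c d where "polynomial_bound \<Gamma> (\<lambda>\<Sigma> \<Sigma>'. exec_seq \<Sigma> ss \<Sigma>') \<Gamma>' c d"
    by blast
  then have "polynomial_bound \<Gamma> (\<lambda>\<Sigma> \<Sigma>'. exec \<Sigma> (SBlock ss) \<Sigma>') \<Gamma> c d"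
    by (rule polynomial_bound_weaken) (auto elim: ExBlockE intro: styp_map_le(2)[OF TsBlock.hyps])
  then show ?case by blast
next
  case (TsIf \<Gamma> l e s1 \<Gamma>1 s2 \<Gamma>2)
  then obtain c1 d1 c2 d2
    where bound1: "polynomial_bound \<Gamma> (\<lambda>\<Sigma> \<Sigma>'. exec \<Sigma> s1 \<Sigma>') \<Gamma>1 c1 d1"
      and bound2: "polynomial_bound \<Gamma> (\<lambda>\<Sigma> \<Sigma>'. exec \<Sigma> s2 \<Sigma>') \<Gamma>2 c2 d2"
    by blast
  have "polynomial_bound \<Gamma> (\<lambda>\<Sigma> \<Sigma>'. exec \<Sigma> s1 \<Sigma>') \<Gamma> (c1 + c2) (d1 + d2)"
    using bound1 by (rule polynomial_bound_weaken) (simp_all add: styp_map_le(1)[OF TsIf.hyps(2)])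
  moreover have "polynomial_bound \<Gamma> (\<lambda>\<Sigma> \<Sigma>'. exec \<Sigma> s2 \<Sigma>') \<Gamma> (c1 + c2) (d1 + d2)"
    using bound2 by (rule polynomial_bound_weaken) (simp_all add: styp_map_le(1)[OF TsIf.hyps(3)])
  ultimately have "polynomial_bound \<Gamma> (\<lambda>\<Sigma> \<Sigma>'. exec \<Sigma> s1 \<Sigma>' \<or> exec \<Sigma> s2 \<Sigma>') \<Gamma> (c1 + c2) (d1 + d2)"
    by (rule polynomial_bound_disj)
  then have "polynomial_bound \<Gamma> (\<lambda>\<Sigma> \<Sigma>'. exec \<Sigma> (SIf e s1 s2) \<Sigma>') \<Gamma> (c1 + c2) (d1 + d2)"
    by (rule polynomial_bound_weaken) (auto elim: ExIfE)
  then show ?case by blast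
next
  case (TsFor \<Gamma> l e x s \<Gamma>b)
  obtain c d where body: "additive_bound (\<Gamma>(x \<mapsto> IInt)) (\<lambda>\<Sigma> \<Sigma>'. exec \<Sigma> s \<Sigma>') \<Gamma>b c d"
    using styp_additive_bound(1)[OF TsFor.hyps(3)] by blast
  have "\<Gamma> \<subseteq>\<^sub>m \<Gamma>(x \<mapsto> IInt)"
    using TsFor.hyps(2) by (auto simp: map_le_def)
  then have "\<Gamma> \<subseteq>\<^sub>m \<Gamma>b"
    using styp_map_le(1)[OF TsFor.hyps(3)] by (rule map_le_trans)
  define c' where "c' = (c + 1) * (expr_weight e + 1) ^ (d + 2)"
  have "polynomial_bound \<Gamma> (\<lambda>\<Sigma> \<Sigma>'. exec \<Sigma> (SFor x e s) \<Sigma>') \<Gamma> (c' + expr_weight e + 1) (d + 2)"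
    unfolding polynomial_bound_def
  proof (intro allI impI)
    fix \<Sigma> \<Sigma>' m
    assume exec: "exec \<Sigma> (SFor x e s) \<Sigma>'" and store: "bounded_store \<Gamma> \<Sigma> m m"
    have "bounded_store \<Gamma> \<Sigma>' (m + expr_weight e) (m + c' * (m + 1) ^ (d + 2))"
      using exec_for_bound[OF exec TsFor.hyps(1) body \<open>\<Gamma> \<subseteq>\<^sub>m \<Gamma>b\<close> store] by (simp add: c'_def)
    moreover have "m + expr_weight e \<le> (c' + expr_weight e + 1) * (m + 1) ^ (d + 2)"
      and "m + c' * (m + 1) ^ (d + 2) \<le> (c' + expr_weight e + 1) * (m + 1) ^ (d + 2)"
      using power_bound_absorb[of "d + 2" m "expr_weight e" c'] by linarith+
    ultimately show "bounded_store \<Gamma> \<Sigma>' ((c' + expr_weight e + 1) * (m + 1) ^ (d + 2))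
        ((c' + expr_weight e + 1) * (m + 1) ^ (d + 2))"
      by (rule bounded_store_mono[OF _ map_le_refl])
  qed
  then show ?case by blast
next
  case (TsNil \<Gamma> l)
  have "polynomial_bound \<Gamma> (\<lambda>\<Sigma> \<Sigma>'. exec_seq \<Sigma> [] \<Sigma>') \<Gamma> 1 1"
    unfolding polynomial_bound_def by (auto elim!: SeqNilE elim: bounded_store_mono)
  then show ?case by blast
next
  case (TsCons \<Gamma> l s \<Gamma>1 ss \<Gamma>')
  then obtain c1 d1 c2 d2
    where "polynomial_bound \<Gamma> (\<lambda>\<Sigma> \<Sigma>'. exec \<Sigma> s \<Sigma>') \<Gamma>1 c1 d1"
      and "polynomial_bound \<Gamma>1 (\<lambda>\<Sigma> \<Sigma>'. exec_seq \<Sigma> ss \<Sigma>') \<Gamma>' c2 d2"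
    by blast
  then have "polynomial_bound \<Gamma> (\<lambda>\<Sigma> \<Sigma>'. exec_seq \<Sigma> (s # ss) \<Sigma>') \<Gamma>' (c2 * (c1 + 1) ^ d2) (d1 * d2)"
    by (rule polynomial_bound_weaken[OF polynomial_bound_relcompp]) (auto elim: SeqConsE)
  then show ?case by blast
qed

lemma map_upds_Some_in_set: "(Map.empty(xs [\<mapsto>] ys)) x = Some v \<Longrightarrow> v \<in> set ys"
  by (auto simp: map_upds_def dest!: map_of_SomeD set_zip_rightD)

lemma sz_le_sz_list: "v \<in> set vs \<Longrightarrow> sz v \<le> sz_list vs"
  unfolding sz_list_def by (rule member_le_sum_list) auto

lemma initial_store_bounded:
  "bounded_store \<Gamma> (Map.empty(xs [\<mapsto>] map VInt vs)) (sz_list vs) (sz_list vs)"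
  unfolding bounded_store_def by (auto dest!: map_upds_Some_in_set intro: sz_le_sz_list)

theorem proposition2:
  assumes "well_typed p"
  shows "\<exists>q :: real poly. \<forall>vs w. prog_sem p vs w \<longrightarrow>
           real (sz w) \<le> poly q (real (sz_list vs))"
proof -
  obtain xs ss e \<Gamma>'
    where p: "p = Prog xs ss e"
      and "styp_seq (Map.empty(xs [\<mapsto>] replicate (length xs) TInt)) False ss \<Gamma>'"
    using assms by (cases rule: well_typed.cases) auto
  then obtain c d where bound: "polynomial_bound (Map.empty(xs [\<mapsto>] replicate (length xs) TInt))
      (\<lambda>\<Sigma> \<Sigma>'. exec_seq \<Sigma> ss \<Sigma>') \<Gamma>' c d"
    using styp_polynomial_bound(2) by blast
  define q :: "real poly" where "q = smult (real c) ([:1, 1:] ^ d) + [:real (expr_weight e):]"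
  have "real (sz w) \<le> poly q (real (sz_list vs))" if sem: "prog_sem p vs w" for vs w
  proof -
    obtain \<Sigma>' where "exec_seq (Map.empty(xs [\<mapsto>] map VInt vs)) ss \<Sigma>'" "eval \<Sigma>' e (VInt w)"
      using sem unfolding p by (cases rule: prog_sem.cases) auto
    then have "sz w \<le> c * (sz_list vs + 1) ^ d + expr_weight e"
      using bound initial_store_bounded eval_sz_le_bound unfolding polynomial_bound_def by blast
    then have "real (sz w) \<le> real (c * (sz_list vs + 1) ^ d + expr_weight e)"
      by (simp only: of_nat_le_iff)
    also have "\<dots> = poly q (real (sz_list vs))"
      by (simp add: q_def poly_power algebra_simps)
    finally show ?thesis .
  qed
  then show ?thesis by blast
qed

end
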